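(* Let $t>0$ and let $X,Y\subset\mathbb{R}^D$ be finite sets such that the weighting vectors of $tX$, $tY$ and $t(X\cup Y)$ all have nonnegative entries. Then $0\le d^t_{Mag}(X,Y)\le 2\,|X\cup Y|$, where $d^t_{Mag}(X,Y)=2\,\mathrm{Mag}(t(X\cup Y))-\mathrm{Mag}(tX)-\mathrm{Mag}(tY)$.
   Context: For a finite set $A\subset\mathbb{R}^D$ and $t>0$, the similarity matrix $\zeta_{tA}(x,y)=\exp(-t\|x-y\|)$ ($x,y\in A$) is invertible; the weighting vector of $tA$ is $\mathbf{w}^t_A=\zeta_{tA}^{-1}\mathbb{1}$ and $\mathrm{Mag}(tA)=\sum_{x\in A}\mathbf{w}^t_A(x)$. $|A|$ is the number of points of $A$. *)

theory Defs
  imports "HOL-Analysis.Analysis"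
begin

definition similarity :: "'a::euclidean_space \<Rightarrow> 'a \<Rightarrow> real" where
  "similarity x y = exp (- norm (x - y))"

text \<open>Weighting vector of A: the vector w (indexed by A, zero outside A)
  with zeta_A w = 1, i.e. w = zeta_A^{-1} 1 (zeta_A is invertible).\<close>
definition weighting :: "'a::euclidean_space set \<Rightarrow> 'a \<Rightarrow> real" where
  "weighting A = (THE w. (\<forall>x\<in>A. (\<Sum>y\<in>A. similarity x y * w y) = 1)
                          \<and> (\<forall>x. x \<notin> A \<longrightarrow> w x = 0))"

definition magnitude :: "'a::euclidean_space set \<Rightarrow> real" where
  "magnitude A = (\<Sum>x\<in>A. weighting A x)"

definition scaled :: "real \<Rightarrow> 'a::euclidean_space set \<Rightarrow> 'a set" where
  "scaled t A = (\<lambda>x. t *\<^sub>R x) ` A"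

definition d_Mag :: "real \<Rightarrow> 'a::euclidean_space set \<Rightarrow> 'a set \<Rightarrow> real" where
  "d_Mag t X Y = 2 * magnitude (scaled t (X \<union> Y)) - magnitude (scaled t X) - magnitude (scaled t Y)"

end

(* Magnitude is monotone under inclusion because the similarity matrix Z of B is positive
   definite: for A \<subseteq> B, extending the weighting w_A of A by zero, one finds
   Mag B - Mag A = (w_B - w_A)^T Z (w_B - w_A) \<ge> 0. With nonnegative weights, the equation of
   row x reads w(x) + (nonnegative terms) = 1, so 0 \<le> Mag A \<le> |A|.

   Positive definiteness of exp(-|x - y|) comes from the subordination identity
   exp(-r) sqrt(pi) / 2 = integral over w > 0 of exp(-w^2 - r^2 / (4 w^2)) (a Cauchy-Schloemilch
   substitution), which writes the similarity form as a mixture of Gaussian forms. Each of these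
   is positive semidefinite (expand exp(2s<x,y>) into powers of the inner product), and close to
   the identity matrix for small widths. *)

theory Submission
  imports Defs "HOL-Probability.Distributions"
begin

section \<open>Quadratic forms of kernels on finite sets\<close>

definition kernel_form :: "('a \<Rightarrow> 'a \<Rightarrow> real) \<Rightarrow> 'a set \<Rightarrow> ('a \<Rightarrow> real) \<Rightarrow> ('a \<Rightarrow> real) \<Rightarrow> real" where
  "kernel_form K A u v = (\<Sum>x\<in>A. \<Sum>y\<in>A. u x * v y * K x y)"

definition positive_definite_on :: "'a set \<Rightarrow> ('a \<Rightarrow> 'a \<Rightarrow> real) \<Rightarrow> bool" where
  "positive_definite_on A K \<longleftrightarrow> (\<forall>v. (\<exists>x\<in>A. v x \<noteq> 0) \<longrightarrow> 0 < kernel_form K A v v)"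

lemma kernel_form_eq_sum_mult:
  "kernel_form K A u v = (\<Sum>x\<in>A. u x * (\<Sum>y\<in>A. K x y * v y))"
  by (simp add: kernel_form_def sum_distrib_left mult_ac)

lemma kernel_form_cong:
  assumes "\<And>x. x \<in> A \<Longrightarrow> u x = u' x" "\<And>x. x \<in> A \<Longrightarrow> v x = v' x"
  shows "kernel_form K A u v = kernel_form K A u' v'"
  unfolding kernel_form_def using assms by (intro sum.cong refl) auto

lemma kernel_form_solution:
  assumes "\<And>x. x \<in> A \<Longrightarrow> (\<Sum>y\<in>A. K x y * v y) = 1"
  shows "kernel_form K A u v = (\<Sum>x\<in>A. u x)"
  by (simp add: kernel_form_eq_sum_mult assms)

lemma kernel_form_sym:
  assumes "\<And>x y. K x y = K y x"
  shows "kernel_form K A u v = kernel_form K A v u"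
  unfolding kernel_form_def by (subst sum.swap) (simp add: assms mult_ac)

lemma kernel_form_diff:
  assumes "\<And>x y. K x y = K y x"
  shows "kernel_form K A (\<lambda>x. u x - v x) (\<lambda>x. u x - v x)
    = kernel_form K A u u - 2 * kernel_form K A u v + kernel_form K A v v"
proof -
  have "kernel_form K A (\<lambda>x. u x - v x) (\<lambda>x. u x - v x)
      = kernel_form K A u u - kernel_form K A u v - kernel_form K A v u + kernel_form K A v v"
    by (simp add: kernel_form_def algebra_simps sum_subtractf sum.distrib)
  then show ?thesis using kernel_form_sym[OF assms, where A=A and u=v and v=u] by simp
qed

lemma kernel_form_kernel_diff:
  "kernel_form (\<lambda>x y. K x y - L x y) A u v = kernel_form K A u v - kernel_form L A u v"
  by (simp add: kernel_form_def right_diff_distrib sum_subtractf)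

lemma kernel_form_product_kernel:
  "kernel_form (\<lambda>x y. f x * g y) A u v = (\<Sum>x\<in>A. u x * f x) * (\<Sum>y\<in>A. v y * g y)"
  by (simp add: kernel_form_def sum_product mult_ac)

lemma kernel_form_insert:
  assumes sym: "\<And>x y. K x y = K y x" and "finite A" "a \<notin> A"
  shows "kernel_form K (insert a A) u u
    = u a * u a * K a a + 2 * u a * (\<Sum>y\<in>A. u y * K a y) + kernel_form K A u u"
proof -
  have "kernel_form K (insert a A) u u
      = u a * u a * K a a + (\<Sum>y\<in>A. u a * u y * K a y) + (\<Sum>x\<in>A. u x * u a * K x a)
        + kernel_form K A u u"
    using assms by (simp add: kernel_form_def sum.distrib add_ac)
  also have "(\<Sum>x\<in>A. u x * u a * K x a) = (\<Sum>y\<in>A. u a * u y * K a y)"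
    by (intro sum.cong refl) (simp add: sym[of _ a] mult_ac)
  finally show ?thesis by (simp add: sum_distrib_left mult_ac)
qed

text \<open>Giving v at a the value that minimises the form of K turns it into the form of the
  Schur complement of K a a.\<close>
lemma kernel_form_Schur_complement:
  fixes K :: "'a \<Rightarrow> 'a \<Rightarrow> real" and v :: "'a \<Rightarrow> real"
  assumes sym: "\<And>x y. K x y = K y x" and "finite A" "a \<notin> A" and d: "K a a \<noteq> 0"
  defines "S \<equiv> (\<Sum>y\<in>A. v y * K a y)"
  shows "kernel_form (\<lambda>x y. K x y - K a x * K a y / K a a) A v v
    = kernel_form K (insert a A) (v(a := - S / K a a)) (v(a := - S / K a a))"
proof -
  let ?u = "v(a := - S / K a a)"
  have "kernel_form (\<lambda>x y. K a x / K a a * K a y) A v v = S * S / K a a"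
    unfolding kernel_form_product_kernel S_def by (simp add: sum_divide_distrib[symmetric])
  then have "kernel_form (\<lambda>x y. K x y - K a x * K a y / K a a) A v v
      = kernel_form K A v v - S * S / K a a"
    by (simp add: kernel_form_kernel_diff)
  moreover have "kernel_form K A ?u ?u = kernel_form K A v v"
    using \<open>a \<notin> A\<close> by (intro kernel_form_cong) auto
  moreover have "(\<Sum>y\<in>A. ?u y * K a y) = S"
    unfolding S_def using \<open>a \<notin> A\<close> by (intro sum.cong refl) auto
  ultimately show ?thesis
    using d by (simp add: kernel_form_insert[where K=K, OF sym \<open>finite A\<close> \<open>a \<notin> A\<close>] field_simps)
qed

lemma kernel_form_mono_neutral:
  assumes "finite B" "A \<subseteq> B" "\<And>x. x \<in> B - A \<Longrightarrow> u x = 0"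
  shows "kernel_form K B u u = kernel_form K A u u"
proof -
  have "kernel_form K B u u = (\<Sum>x\<in>A. \<Sum>y\<in>B. u x * u y * K x y)"
    unfolding kernel_form_def by (rule sum.mono_neutral_right) (use assms in auto)
  also have "\<dots> = kernel_form K A u u"
    unfolding kernel_form_def by (intro sum.cong refl sum.mono_neutral_right) (use assms in auto)
  finally show ?thesis .
qed

lemma positive_definite_on_insert_Schur:
  assumes sym: "\<And>x y. K x y = K y x" and "finite A" "a \<notin> A"
    and pd: "positive_definite_on (insert a A) K"
  shows "0 < K a a" "positive_definite_on A (\<lambda>x y. K x y - K a x * K a y / K a a)"
proof -
  let ?e = "\<lambda>x. if x = a then 1 else 0 :: real"
  have "kernel_form K A ?e ?e = 0" "(\<Sum>y\<in>A. ?e y * K a y) = 0"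
    using \<open>a \<notin> A\<close> unfolding kernel_form_def by (auto intro!: sum.neutral)
  then have "kernel_form K (insert a A) ?e ?e = K a a"
    by (simp add: kernel_form_insert[where K=K, OF sym \<open>finite A\<close> \<open>a \<notin> A\<close>])
  moreover have "0 < kernel_form K (insert a A) ?e ?e"
    using pd unfolding positive_definite_on_def by auto
  ultimately show Kaa: "0 < K a a" by simp
  show "positive_definite_on A (\<lambda>x y. K x y - K a x * K a y / K a a)"
    unfolding positive_definite_on_def
  proof (intro allI impI)
    fix v :: "'a \<Rightarrow> real"
    let ?u = "v(a := - (\<Sum>y\<in>A. v y * K a y) / K a a)"
    assume "\<exists>x\<in>A. v x \<noteq> 0"
    then have "\<exists>x\<in>insert a A. ?u x \<noteq> 0"
      using \<open>a \<notin> A\<close> by (metis fun_upd_other insertCI)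
    then have "0 < kernel_form K (insert a A) ?u ?u"
      using pd unfolding positive_definite_on_def by blast
    then show "0 < kernel_form (\<lambda>x y. K x y - K a x * K a y / K a a) A v v"
      using kernel_form_Schur_complement[where K=K, OF sym \<open>finite A\<close> \<open>a \<notin> A\<close>] Kaa by simp
  qed
qed

text \<open>Gaussian elimination: eliminating one point leaves the positive definite Schur complement.\<close>
lemma positive_definite_on_solvable:
  assumes "finite A" "\<And>x y. K x y = K y x" "positive_definite_on A K"
  shows "\<exists>w. \<forall>x\<in>A. (\<Sum>y\<in>A. K x y * w y) = b x"
  using assms
proof (induction A arbitrary: K b rule: finite_induct)
  case empty
  then show ?case by simp
next
  case (insert a A)
  let ?K' = "\<lambda>x y. K x y - K a x * K a y / K a a"
  note Schur = positive_definite_on_insert_Schur[where K=K, OF insert.prems(1) insert.hyps(1,2) insert.prems(2)]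
  have Kaa: "0 < K a a" by (fact Schur(1))
  have pd': "positive_definite_on A ?K'" by (fact Schur(2))
  have sym': "?K' x y = ?K' y x" for x y
    using insert.prems(1)[of x y] by (simp add: mult.commute)
  have "\<exists>w'. \<forall>x\<in>A. (\<Sum>y\<in>A. ?K' x y * w' y) = b x - K a x * b a / K a a"
    by (rule insert.IH[OF sym' pd'])
  then obtain w' where w': "\<And>x. x \<in> A \<Longrightarrow> (\<Sum>y\<in>A. ?K' x y * w' y) = b x - K a x * b a / K a a"
    by blast
  define T where "T = (\<Sum>y\<in>A. K a y * w' y)"
  define w where "w = w'(a := (b a - T) / K a a)"
  have sum_w: "(\<Sum>y\<in>insert a A. K x y * w y) = K x a * (b a - T) / K a a + (\<Sum>y\<in>A. K x y * w' y)" for x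
  proof -
    have "(\<Sum>y\<in>A. K x y * w y) = (\<Sum>y\<in>A. K x y * w' y)"
      using insert.hyps by (intro sum.cong refl) (auto simp: w_def)
    then show ?thesis using insert.hyps by (simp add: w_def)
  qed
  have "(\<Sum>y\<in>insert a A. K x y * w y) = b x" if "x \<in> insert a A" for x
  proof (cases "x = a")
    case True
    have "(\<Sum>y\<in>insert a A. K a y * w y) = K a a * (b a - T) / K a a + T"
      by (simp only: sum_w T_def)
    then show ?thesis using True Kaa by simp
  next
    case False
    then have "x \<in> A" using that by simp
    have "(\<Sum>y\<in>A. ?K' x y * w' y) = (\<Sum>y\<in>A. K x y * w' y) - K a x / K a a * T"
      unfolding T_def by (simp add: sum_distrib_left sum_subtractf algebra_simps)
    moreover have "K x a * (b a - T) / K a a = K a x * b a / K a a - K a x / K a a * T"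
      using insert.prems(1)[of x a] by (simp add: diff_divide_distrib right_diff_distrib)
    ultimately show ?thesis
      using w'[OF \<open>x \<in> A\<close>] sum_w[of x] by linarith
  qed
  then show ?case by blast
qed

lemma positive_definite_on_solution_unique:
  assumes pd: "positive_definite_on A K"
    and u: "\<And>x. x \<in> A \<Longrightarrow> (\<Sum>y\<in>A. K x y * u y) = b x"
    and v: "\<And>x. x \<in> A \<Longrightarrow> (\<Sum>y\<in>A. K x y * v y) = b x"
    and "x \<in> A"
  shows "u x = v x"
proof (rule ccontr)
  let ?d = "\<lambda>x. u x - v x"
  assume "u x \<noteq> v x"
  then have "0 < kernel_form K A ?d ?d"
    using pd \<open>x \<in> A\<close> unfolding positive_definite_on_def by (metis eq_iff_diff_eq_0)
  moreover have "(\<Sum>y\<in>A. K x y * ?d y) = 0" if "x \<in> A" for x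
    using u[OF that] v[OF that] by (simp add: right_diff_distrib sum_subtractf)
  ultimately show False by (simp add: kernel_form_eq_sum_mult)
qed

lemma solution_sum_mono:
  assumes "finite B" "A \<subseteq> B" and sym: "\<And>x y. K x y = K y x"
    and psd: "\<And>v. 0 \<le> kernel_form K B v v"
    and u: "\<And>x. x \<in> A \<Longrightarrow> (\<Sum>y\<in>A. K x y * u y) = 1" "\<And>x. x \<notin> A \<Longrightarrow> u x = 0"
    and w: "\<And>x. x \<in> B \<Longrightarrow> (\<Sum>y\<in>B. K x y * w y) = 1"
  shows "(\<Sum>x\<in>A. u x) \<le> (\<Sum>x\<in>B. w x)"
proof -
  have sum_u: "(\<Sum>x\<in>B. u x) = (\<Sum>x\<in>A. u x)"
    using assms by (intro sum.mono_neutral_right) auto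
  have "kernel_form K B u u = kernel_form K A u u"
    using assms by (intro kernel_form_mono_neutral) auto
  also have "\<dots> = (\<Sum>x\<in>A. u x)"
    by (rule kernel_form_solution) (fact u(1))
  finally have "kernel_form K B u u = (\<Sum>x\<in>A. u x)" .
  moreover have "kernel_form K B w u = (\<Sum>x\<in>A. u x)"
    using kernel_form_sym[where K=K, OF sym] by (simp add: kernel_form_solution w sum_u)
  moreover have "kernel_form K B w w = (\<Sum>x\<in>B. w x)"
    by (simp add: kernel_form_solution w)
  ultimately show ?thesis
    using psd[of "\<lambda>x. w x - u x"] by (simp add: kernel_form_diff[where K=K, OF sym])
qed

lemma positive_definite_on_imp_kernel_form_nonneg:
  assumes "positive_definite_on A K"
  shows "0 \<le> kernel_form K A v v"
proof (cases "\<exists>x\<in>A. v x \<noteq> 0")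
  case True
  then show ?thesis using assms by (simp add: positive_definite_on_def less_imp_le)
next
  case False
  then show ?thesis by (simp add: kernel_form_def)
qed

section \<open>Gaussian kernels\<close>

definition gaussian_kernel :: "real \<Rightarrow> 'a::real_normed_vector \<Rightarrow> 'a \<Rightarrow> real" where
  "gaussian_kernel s x y = exp (- s * (norm (x - y))\<^sup>2)"

lemma kernel_form_inner_power_nonneg:
  fixes A :: "'a::euclidean_space set"
  shows "0 \<le> kernel_form (\<lambda>x y. (inner x y) ^ k) A v v"
proof (induction k arbitrary: v)
  case 0
  then show ?case by (simp add: kernel_form_def sum_product[symmetric])
next
  case (Suc k)
  have "(inner x y) ^ Suc k = (\<Sum>i\<in>Basis. inner x i * inner y i) * (inner x y) ^ k" for x y :: 'a
    by (metis euclidean_inner power_Suc)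
  then have "kernel_form (\<lambda>x y. (inner x y) ^ Suc k) A v v
      = (\<Sum>x\<in>A. \<Sum>y\<in>A. \<Sum>i\<in>Basis. v x * inner x i * (v y * inner y i) * (inner x y) ^ k)"
    unfolding kernel_form_def by (simp add: sum_distrib_left sum_distrib_right mult_ac)
  also have "\<dots> = (\<Sum>i\<in>Basis. \<Sum>x\<in>A. \<Sum>y\<in>A. v x * inner x i * (v y * inner y i) * (inner x y) ^ k)"
    by (subst sum.swap) (rule sum.cong[OF refl], rule sum.swap)
  also have "\<dots> = (\<Sum>i\<in>Basis. kernel_form (\<lambda>x y. (inner x y) ^ k) A (\<lambda>x. v x * inner x i) (\<lambda>x. v x * inner x i))"
    by (simp add: kernel_form_def)
  also have "\<dots> \<ge> 0"
    by (intro sum_nonneg Suc.IH)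
  finally show ?case .
qed

lemma kernel_form_exp_inner_nonneg:
  fixes A :: "'a::euclidean_space set"
  assumes "0 \<le> c"
  shows "0 \<le> kernel_form (\<lambda>x y. exp (c * inner x y)) A v v"
proof -
  have series: "(\<lambda>n. kernel_form (\<lambda>x y. (c * inner x y) ^ n / fact n) A v v)
      sums kernel_form (\<lambda>x y. exp (c * inner x y)) A v v"
    unfolding kernel_form_def
    using exp_converges[where 'a=real] by (intro sums_sum sums_mult) (simp add: real_scaleR_def divide_inverse mult.commute)
  have terms_nonneg: "0 \<le> kernel_form (\<lambda>x y. (c * inner x y) ^ n / fact n) A v v" for n
  proof -
    have "kernel_form (\<lambda>x y. (c * inner x y) ^ n / fact n) A v v
        = c ^ n / fact n * kernel_form (\<lambda>x y. (inner x y) ^ n) A v v"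
      by (simp add: kernel_form_def sum_distrib_left power_mult_distrib mult_ac)
    then show ?thesis
      using assms kernel_form_inner_power_nonneg[of n A v] by simp
  qed
  show ?thesis
    using sums_le[OF terms_nonneg sums_zero series] .
qed

text \<open>Factor exp(-s|x|^2) exp(-s|y|^2) out of the Gaussian kernel: what remains is exp(2s<x,y>).\<close>
lemma kernel_form_gaussian_nonneg:
  fixes A :: "'a::euclidean_space set"
  assumes "0 \<le> s"
  shows "0 \<le> kernel_form (gaussian_kernel s) A v v"
proof -
  let ?u = "\<lambda>x. v x * exp (- s * inner x x)"
  have "gaussian_kernel s x y = exp (- s * inner x x) * exp (- s * inner y y) * exp (2 * s * inner x y)"
    for x y :: 'a
    by (simp add: gaussian_kernel_def power2_norm_eq_inner inner_diff inner_commute[of y x]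
        algebra_simps flip: exp_add)
  then have "kernel_form (gaussian_kernel s) A v v = kernel_form (\<lambda>x y. exp (2 * s * inner x y)) A ?u ?u"
    by (simp add: kernel_form_def mult_ac)
  also have "\<dots> \<ge> 0"
    using assms by (intro kernel_form_exp_inner_nonneg) simp
  finally show ?thesis .
qed

lemma abs_mult_mult_le_sum_squares:
  fixes a b k \<eta> :: real
  assumes "\<bar>k\<bar> \<le> \<eta>"
  shows "\<bar>a * b * k\<bar> \<le> \<eta> * (a\<^sup>2 + b\<^sup>2) / 2"
proof -
  have "\<bar>a * b * k\<bar> \<le> \<bar>a * b\<bar> * \<eta>"
    using assms by (simp add: abs_mult mult_left_mono)
  also have "\<dots> \<le> (a\<^sup>2 + b\<^sup>2) / 2 * \<eta>"
    using sum_squares_bound[of "\<bar>a\<bar>" "\<bar>b\<bar>"] assms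
    by (intro mult_right_mono) (auto simp: abs_mult)
  finally show ?thesis
    by (simp add: mult.commute)
qed

lemma kernel_form_diagonally_dominant:
  fixes K :: "'a \<Rightarrow> 'a \<Rightarrow> real" and v :: "'a \<Rightarrow> real"
  assumes "finite A" "0 \<le> \<eta>"
    and diag: "\<And>x. x \<in> A \<Longrightarrow> K x x = 1"
    and off_diag: "\<And>x y. x \<in> A \<Longrightarrow> y \<in> A \<Longrightarrow> x \<noteq> y \<Longrightarrow> \<bar>K x y\<bar> \<le> \<eta>"
  shows "(1 - \<eta> * card A) * (\<Sum>x\<in>A. (v x)\<^sup>2) \<le> kernel_form K A v v"
proof -
  have term_ge: "(if x = y then (v x)\<^sup>2 else 0) - \<eta> * ((v x)\<^sup>2 + (v y)\<^sup>2) / 2 \<le> v x * v y * K x y"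
    if "x \<in> A" "y \<in> A" for x y
  proof (cases "x = y")
    case True
    then show ?thesis using diag[OF that(1)] \<open>0 \<le> \<eta>\<close> by (simp add: power2_eq_square)
  next
    case False
    then show ?thesis
      using abs_mult_mult_le_sum_squares[OF off_diag[OF that False], of "v x" "v y"]
      by (simp add: abs_le_iff)
  qed
  have diag_sum: "(\<Sum>x\<in>A. \<Sum>y\<in>A. if x = y then (v x)\<^sup>2 else 0) = (\<Sum>x\<in>A. (v x)\<^sup>2)"
    using \<open>finite A\<close> by simp
  have double: "(\<Sum>x\<in>A. \<Sum>y\<in>A. (v x)\<^sup>2 + (v y)\<^sup>2) = 2 * card A * (\<Sum>x\<in>A. (v x)\<^sup>2)"
    by (simp add: sum.distrib flip: sum_distrib_left)
  have "(\<Sum>x\<in>A. \<Sum>y\<in>A. \<eta> * ((v x)\<^sup>2 + (v y)\<^sup>2) / 2)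
      = \<eta> / 2 * (\<Sum>x\<in>A. \<Sum>y\<in>A. (v x)\<^sup>2 + (v y)\<^sup>2)"
    by (simp add: sum_distrib_left)
  also have "\<dots> = \<eta> * card A * (\<Sum>x\<in>A. (v x)\<^sup>2)"
    unfolding double by simp
  finally have lower: "(\<Sum>x\<in>A. \<Sum>y\<in>A. (if x = y then (v x)\<^sup>2 else 0) - \<eta> * ((v x)\<^sup>2 + (v y)\<^sup>2) / 2)
      = (1 - \<eta> * card A) * (\<Sum>x\<in>A. (v x)\<^sup>2)"
    by (simp add: sum_subtractf diag_sum left_diff_distrib)
  have "(\<Sum>x\<in>A. \<Sum>y\<in>A. (if x = y then (v x)\<^sup>2 else 0) - \<eta> * ((v x)\<^sup>2 + (v y)\<^sup>2) / 2)
      \<le> kernel_form K A v v"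
    unfolding kernel_form_def by (intro sum_mono term_ge)
  then show ?thesis
    by (simp only: lower)
qed

text \<open>For large s the Gaussian kernel is nearly the identity matrix.\<close>
lemma eventually_kernel_form_gaussian_ge:
  fixes A :: "'a::euclidean_space set"
  assumes "finite A"
  shows "\<forall>\<^sub>F s in at_top. (\<Sum>x\<in>A. (v x)\<^sup>2) / 2 \<le> kernel_form (gaussian_kernel s) A v v"
proof -
  define \<eta> where "\<eta> = 1 / (2 * card A)"
  have small: "\<forall>\<^sub>F s in at_top. gaussian_kernel s x y \<le> \<eta>" if "x \<noteq> y" "A \<noteq> {}" for x y :: 'a
  proof -
    have "0 < (norm (x - y))\<^sup>2" "0 < \<eta>"
      using that \<open>finite A\<close> by (auto simp: \<eta>_def card_gt_0_iff)
    then have "gaussian_kernel s x y \<le> \<eta>" if "ln (1 / \<eta>) / (norm (x - y))\<^sup>2 \<le> s" for s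
      using that by (simp add: gaussian_kernel_def field_simps ln_div flip: ln_ge_iff)
    then show ?thesis
      using eventually_ge_at_top by (rule eventually_mono[rotated])
  qed
  have "\<forall>\<^sub>F s in at_top. \<forall>(x, y) \<in> A \<times> A. x \<noteq> y \<longrightarrow> gaussian_kernel s x y \<le> \<eta>"
    using \<open>finite A\<close> small
    by (intro eventually_ball_finite) (auto intro: eventually_mono)
  then show ?thesis
  proof (rule eventually_mono)
    fix s assume "\<forall>(x, y) \<in> A \<times> A. x \<noteq> y \<longrightarrow> gaussian_kernel s x y \<le> \<eta>"
    then have "(1 - \<eta> * card A) * (\<Sum>x\<in>A. (v x)\<^sup>2) \<le> kernel_form (gaussian_kernel s) A v v"
      using \<open>finite A\<close>
      by (intro kernel_form_diagonally_dominant) (auto simp: \<eta>_def gaussian_kernel_def)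
    moreover have "A \<noteq> {} \<Longrightarrow> 1 - \<eta> * card A = 1 / 2"
      using \<open>finite A\<close> by (simp add: \<eta>_def)
    ultimately show "(\<Sum>x\<in>A. (v x)\<^sup>2) / 2 \<le> kernel_form (gaussian_kernel s) A v v"
      by (cases "A = {}") (auto simp: kernel_form_def)
  qed
qed

section \<open>Subordination of the exponential kernel to Gaussians\<close>

lemma has_bochner_integral_gaussian: "has_bochner_integral lborel (\<lambda>u::real. exp (- u\<^sup>2)) (sqrt pi)"
  using has_bochner_integral_even_function[OF gaussian_moment_0] by simp

lemma has_integral_gaussian_half_line: "((\<lambda>u::real. exp (- u\<^sup>2)) has_integral sqrt pi / 2) {0<..}"
proof -
  have "integral\<^sup>L lborel (\<lambda>u::real. indicator {0..} u *\<^sub>R exp (- u\<^sup>2)) = sqrt pi / 2"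
    by (rule has_bochner_integral_integral_eq[OF gaussian_moment_0])
  with has_integral_integral_lborel[OF integrable.intros[OF gaussian_moment_0]]
  have "((\<lambda>u::real. indicator {0..} u *\<^sub>R exp (- u\<^sup>2)) has_integral sqrt pi / 2) UNIV"
    by (simp only:)
  then have "((\<lambda>u::real. if u \<in> {0..} then exp (- u\<^sup>2) else 0) has_integral sqrt pi / 2) UNIV"
    by (rule has_integral_eq[rotated]) (simp add: indicator_def)
  then have closed: "((\<lambda>u::real. exp (- u\<^sup>2)) has_integral sqrt pi / 2) {0..}"
    by (simp only: has_integral_restrict_UNIV)
  have "negligible {u \<in> {0..} - {0<..}. exp (- u\<^sup>2) \<noteq> (0::real)}"
    by (rule negligible_subset[OF negligible_sing[of 0]]) auto
  moreover have "negligible {u \<in> {0<..} - {0..}. exp (- u\<^sup>2) \<noteq> (0::real)}"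
    by (rule negligible_subset[OF negligible_empty]) auto
  ultimately show ?thesis
    using has_integral_spike_set_eq[where f = "\<lambda>u::real. exp (- u\<^sup>2)" and S = "{0..}" and T = "{0<..}"]
      closed by blast
qed

lemma integral_lborel_eq_half_symmetrization:
  fixes h :: "real \<Rightarrow> real"
  assumes "integrable lborel h" "\<And>u. h u + h (- u) = f u"
  shows "integral\<^sup>L lborel h = integral\<^sup>L lborel f / 2"
proof -
  have reflected: "integrable lborel (\<lambda>u. h (0 + (-1) * u))"
    by (rule lborel_integrable_real_affine[OF assms(1)]) simp
  have reflected_integral: "integral\<^sup>L lborel (\<lambda>u. h (0 + (-1) * u)) = integral\<^sup>L lborel h"
    using lborel_integral_real_affine[of "-1" h 0] by simp
  have "f = (\<lambda>u. h u + h (0 + (-1) * u))"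
    using assms(2) by auto
  then have "integral\<^sup>L lborel f = integral\<^sup>L lborel h + integral\<^sup>L lborel (\<lambda>u. h (0 + (-1) * u))"
    using assms(1) reflected by simp
  then show ?thesis
    using reflected_integral by simp
qed

text \<open>For q > 0, the positive root of w^2 - u w - q = 0, i.e. the inverse of w \<mapsto> w - q / w
  on the positive half-line.\<close>
definition schloemilch_root :: "real \<Rightarrow> real \<Rightarrow> real" where
  "schloemilch_root q u = (u + sqrt (u\<^sup>2 + 4 * q)) / 2"

lemma abs_less_sqrt_square_plus:
  fixes u q :: real
  assumes "0 < q"
  shows "\<bar>u\<bar> < sqrt (u\<^sup>2 + 4 * q)"
  using assms by (intro real_less_rsqrt) simp

lemma schloemilch_root_pos: "0 < q \<Longrightarrow> 0 < schloemilch_root q u"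
  using abs_less_sqrt_square_plus[of q u] by (simp add: schloemilch_root_def)

lemma schloemilch_root_diff:
  assumes "0 < q"
  shows "schloemilch_root q u - q / schloemilch_root q u = u"
proof -
  let ?g = "schloemilch_root q u"
  have "?g * (?g - u) = ((sqrt (u\<^sup>2 + 4 * q))\<^sup>2 - u\<^sup>2) / 4"
    by (simp add: schloemilch_root_def power2_eq_square field_simps)
  also have "\<dots> = q"
    using assms by simp
  finally show ?thesis
    using schloemilch_root_pos[OF assms, of u] by (simp add: field_simps)
qed

lemma schloemilch_root_of_diff:
  assumes "0 < q" "0 < w"
  shows "schloemilch_root q (w - q / w) = w"
proof -
  have "(w - q / w)\<^sup>2 + 4 * q = (w + q / w)\<^sup>2"
    using assms by (simp add: power2_eq_square field_simps)
  then show ?thesis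
    using assms by (simp add: schloemilch_root_def)
qed

lemma bij_betw_schloemilch_root:
  assumes "0 < q"
  shows "bij_betw (schloemilch_root q) UNIV {0<..}"
proof (rule bij_betw_byWitness[where f' = "\<lambda>w. w - q / w"])
  show "\<forall>u\<in>UNIV. schloemilch_root q u - q / schloemilch_root q u = u"
    using schloemilch_root_diff[OF assms] by simp
  show "\<forall>w\<in>{0<..}. schloemilch_root q (w - q / w) = w"
    using schloemilch_root_of_diff[OF assms] by simp
  show "schloemilch_root q ` UNIV \<subseteq> {0<..}"
    using schloemilch_root_pos[OF assms] by auto
qed auto

definition schloemilch_jacobian :: "real \<Rightarrow> real \<Rightarrow> real" where
  "schloemilch_jacobian q u = (1 + u / sqrt (u\<^sup>2 + 4 * q)) / 2"

lemma has_real_derivative_schloemilch_root: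
  assumes "0 < q"
  shows "(schloemilch_root q has_real_derivative schloemilch_jacobian q u) (at u)"
proof -
  have "0 < u\<^sup>2 + 4 * q"
    using assms by (simp add: add_nonneg_pos)
  then have "((\<lambda>u. (u + sqrt (u\<^sup>2 + 4 * q)) / 2) has_real_derivative
      (1 + inverse (sqrt (u\<^sup>2 + 4 * q)) / 2 * (2 * u)) / 2) (at u)"
    by (auto intro!: derivative_eq_intros)
  then show ?thesis
    by (simp add: schloemilch_root_def[abs_def] schloemilch_jacobian_def field_simps)
qed

lemma schloemilch_jacobian_bounds:
  assumes "0 < q"
  shows "0 < schloemilch_jacobian q u" "schloemilch_jacobian q u \<le> 1"
proof -
  have "0 < sqrt (u\<^sup>2 + 4 * q)" "\<bar>u\<bar> < sqrt (u\<^sup>2 + 4 * q)"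
    using abs_less_sqrt_square_plus[OF assms, of u] by linarith+
  then have "-1 < u / sqrt (u\<^sup>2 + 4 * q)" "u / sqrt (u\<^sup>2 + 4 * q) < 1"
    by (auto simp: divide_less_eq less_divide_eq abs_less_iff)
  then show "0 < schloemilch_jacobian q u" "schloemilch_jacobian q u \<le> 1"
    by (auto simp: schloemilch_jacobian_def)
qed

lemma schloemilch_jacobian_reflect: "schloemilch_jacobian q u + schloemilch_jacobian q (- u) = 1"
  by (simp add: schloemilch_jacobian_def field_simps)

text \<open>Since the Jacobian and its reflection add up to 1, weighting the Gaussian by it halves the integral.\<close>
lemma has_integral_schloemilch_jacobian_gaussian:
  assumes "0 < q"
  shows "((\<lambda>u. schloemilch_jacobian q u * exp (- u\<^sup>2)) has_integral sqrt pi / 2) UNIV"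
proof -
  let ?h = "\<lambda>u. schloemilch_jacobian q u * exp (- u\<^sup>2)"
  have "integrable lborel ?h"
  proof (rule Bochner_Integration.integrable_bound)
    show "integrable lborel (\<lambda>u::real. exp (- u\<^sup>2))"
      by (rule integrable.intros[OF has_bochner_integral_gaussian])
    show "?h \<in> borel_measurable lborel"
      unfolding schloemilch_jacobian_def by measurable
    show "AE u in lborel. norm (?h u) \<le> norm (exp (- u\<^sup>2) :: real)"
      using schloemilch_jacobian_bounds[OF assms]
      by (intro AE_I2) (simp add: abs_mult abs_of_pos mult_left_le_one_le less_imp_le)
  qed
  moreover have "?h u + ?h (- u) = exp (- u\<^sup>2)" for u
    using schloemilch_jacobian_reflect[of q u] by (simp flip: distrib_right)
  ultimately have "integral\<^sup>L lborel ?h = integral\<^sup>L lborel (\<lambda>u. exp (- u\<^sup>2)) / 2"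
    by (rule integral_lborel_eq_half_symmetrization)
  also have "\<dots> = sqrt pi / 2"
    by (simp add: has_bochner_integral_integral_eq[OF has_bochner_integral_gaussian])
  finally show ?thesis
    using has_integral_integral_lborel[OF \<open>integrable lborel ?h\<close>] by (simp only:)
qed

text \<open>The Cauchy-Schloemilch substitution w = schloemilch_root q u, i.e. u = w - q / w.\<close>
lemma has_integral_cauchy_schloemilch:
  assumes "0 < q"
  shows "((\<lambda>w::real. exp (- (w - q / w)\<^sup>2)) has_integral sqrt pi / 2) {0<..}"
proof -
  define F where "F w = exp (- (w - q / w)\<^sup>2)" for w
  let ?g = "schloemilch_root q" and ?g' = "schloemilch_jacobian q"
  have "(\<lambda>u. \<bar>?g' u\<bar> * F (?g u)) = (\<lambda>u. ?g' u * exp (- u\<^sup>2))"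
    using schloemilch_jacobian_bounds(1)[OF assms]
    by (simp add: fun_eq_iff F_def schloemilch_root_diff[OF assms] abs_of_pos)
  moreover note has_integral_schloemilch_jacobian_gaussian[OF assms]
  moreover have "(\<lambda>u. ?g' u * exp (- u\<^sup>2)) absolutely_integrable_on UNIV"
    using calculation schloemilch_jacobian_bounds(1)[OF assms]
    by (intro nonnegative_absolutely_integrable_1) (auto simp: less_imp_le)
  ultimately have "(\<lambda>u. \<bar>?g' u\<bar> * F (?g u)) absolutely_integrable_on UNIV
      \<and> integral UNIV (\<lambda>u. \<bar>?g' u\<bar> * F (?g u)) = sqrt pi / 2"
    by (simp add: integral_unique)
  then have "F absolutely_integrable_on ?g ` UNIV \<and> integral (?g ` UNIV) F = sqrt pi / 2"
  proof (rule has_absolute_integral_change_of_variables_1'[THEN iffD1, rotated -1])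
    show "(?g has_field_derivative ?g' u) (at u within UNIV)" for u
      by (rule has_real_derivative_schloemilch_root[OF assms])
    show "inj_on ?g UNIV"
      using bij_betw_schloemilch_root[OF assms] by (simp add: bij_betw_def)
  qed simp
  moreover have "?g ` UNIV = {0<..}"
    using bij_betw_schloemilch_root[OF assms] by (simp add: bij_betw_def)
  ultimately have F_int: "F integrable_on {0<..}" and F_val: "integral {0<..} F = sqrt pi / 2"
    by (auto simp: absolutely_integrable_on_def)
  have "(F has_integral sqrt pi / 2) {0<..}"
    using integrable_integral[OF F_int] unfolding F_val .
  then show ?thesis
    by (simp add: F_def[abs_def])
qed

lemma has_integral_exp_subordination:
  assumes "0 \<le> r"
  shows "((\<lambda>w::real. exp (- w\<^sup>2 - r\<^sup>2 / (4 * w\<^sup>2))) has_integral exp (- r) * sqrt pi / 2) {0<..}"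
proof (cases "r = 0")
  case True
  then show ?thesis using has_integral_gaussian_half_line by simp
next
  case False
  have "((\<lambda>w::real. exp (- r) * exp (- (w - r / 2 / w)\<^sup>2)) has_integral exp (- r) * (sqrt pi / 2)) {0<..}"
    using False assms by (intro has_integral_mult_right has_integral_cauchy_schloemilch) simp
  then have "((\<lambda>w::real. exp (- w\<^sup>2 - r\<^sup>2 / (4 * w\<^sup>2))) has_integral exp (- r) * (sqrt pi / 2)) {0<..}"
  proof (rule has_integral_eq[rotated])
    fix w :: real
    assume "w \<in> {0<..}"
    then have "- r - (w - r / 2 / w)\<^sup>2 = - w\<^sup>2 - r\<^sup>2 / (4 * w\<^sup>2)"
      by (simp add: power2_eq_square field_simps)
    then show "exp (- r) * exp (- (w - r / 2 / w)\<^sup>2) = exp (- w\<^sup>2 - r\<^sup>2 / (4 * w\<^sup>2))"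
      by (simp flip: exp_add)
  qed
  then show ?thesis
    by simp
qed

lemma has_integral_pos_of_ge_on_interval:
  fixes f :: "real \<Rightarrow> real"
  assumes f: "(f has_integral I) S" and nonneg: "\<And>x. x \<in> S \<Longrightarrow> 0 \<le> f x"
    and "{a..b} \<subseteq> S" "a < b" "0 < m" and ge: "\<And>x. x \<in> {a..b} \<Longrightarrow> m \<le> f x"
  shows "0 < I"
proof -
  have f_ab: "f integrable_on {a..b}"
    using integrable_on_subinterval f \<open>{a..b} \<subseteq> S\<close> by blast
  have "0 < (b - a) * m"
    using \<open>a < b\<close> \<open>0 < m\<close> by simp
  also have "\<dots> = integral {a..b} (\<lambda>_. m)"
    using \<open>a < b\<close> by simp
  also have "\<dots> \<le> integral {a..b} f"
    using ge by (intro integral_le[OF integrable_const_ivl f_ab]) auto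
  also have "\<dots> \<le> integral S f"
    using f nonneg \<open>{a..b} \<subseteq> S\<close> by (intro integral_subset_le[OF _ f_ab]) auto
  also have "\<dots> = I"
    using f by (rule integral_unique)
  finally show ?thesis .
qed

lemma has_integral_kernel_form_gaussian_subordination:
  fixes A :: "'a::euclidean_space set"
  assumes "finite A"
  shows "((\<lambda>w. exp (- w\<^sup>2) * kernel_form (gaussian_kernel (1 / (4 * w\<^sup>2))) A v v)
    has_integral kernel_form similarity A v v * (sqrt pi / 2)) {0<..}"
proof -
  have "exp (- w\<^sup>2) * gaussian_kernel (1 / (4 * w\<^sup>2)) x y = exp (- w\<^sup>2 - (norm (x - y))\<^sup>2 / (4 * w\<^sup>2))"
    for w and x y :: 'a
  proof -
    have "- w\<^sup>2 - (norm (x - y))\<^sup>2 / (4 * w\<^sup>2) = - w\<^sup>2 + - (1 / (4 * w\<^sup>2)) * (norm (x - y))\<^sup>2"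
      by simp
    then show ?thesis
      by (simp only: gaussian_kernel_def exp_add)
  qed
  then have integrand: "(\<lambda>w. exp (- w\<^sup>2) * kernel_form (gaussian_kernel (1 / (4 * w\<^sup>2))) A v v)
      = (\<lambda>w. \<Sum>x\<in>A. \<Sum>y\<in>A. v x * v y * exp (- w\<^sup>2 - (norm (x - y))\<^sup>2 / (4 * w\<^sup>2)))"
    by (simp add: fun_eq_iff kernel_form_def sum_distrib_left mult_ac)
  have integral: "(\<Sum>x\<in>A. \<Sum>y\<in>A. v x * v y * (exp (- norm (x - y)) * sqrt pi / 2))
      = kernel_form similarity A v v * (sqrt pi / 2)"
    by (simp add: kernel_form_def similarity_def sum_distrib_left sum_divide_distrib mult_ac)
  have "((\<lambda>w. \<Sum>x\<in>A. \<Sum>y\<in>A. v x * v y * exp (- w\<^sup>2 - (norm (x - y))\<^sup>2 / (4 * w\<^sup>2)))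
      has_integral (\<Sum>x\<in>A. \<Sum>y\<in>A. v x * v y * (exp (- norm (x - y)) * sqrt pi / 2))) {0<..}"
    using \<open>finite A\<close>
    by (intro has_integral_sum has_integral_mult_right has_integral_exp_subordination) auto
  then show ?thesis
    unfolding integrand integral .
qed

lemma kernel_form_gaussian_subordination_lower_bound:
  fixes A :: "'a::euclidean_space set"
  assumes "finite A"
  obtains c where "0 < c" "\<And>w. w \<in> {c / 2..c} \<Longrightarrow>
    exp (- c\<^sup>2) * ((\<Sum>x\<in>A. (v x)\<^sup>2) / 2) \<le> exp (- w\<^sup>2) * kernel_form (gaussian_kernel (1 / (4 * w\<^sup>2))) A v v"
proof -
  obtain s0 where s0: "\<And>s. s0 \<le> s \<Longrightarrow> (\<Sum>x\<in>A. (v x)\<^sup>2) / 2 \<le> kernel_form (gaussian_kernel s) A v v"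
    using eventually_kernel_form_gaussian_ge[OF \<open>finite A\<close>] by (auto simp: eventually_at_top_linorder)
  define c where "c = 1 / (2 * sqrt (max 1 s0))"
  have "0 < c"
    by (simp add: c_def)
  have c_sq: "1 / (4 * c\<^sup>2) = max 1 s0"
    by (simp add: c_def power_divide power_mult_distrib)
  have "exp (- c\<^sup>2) * ((\<Sum>x\<in>A. (v x)\<^sup>2) / 2)
      \<le> exp (- w\<^sup>2) * kernel_form (gaussian_kernel (1 / (4 * w\<^sup>2))) A v v" if "w \<in> {c / 2..c}" for w
  proof -
    have "0 < w" "w \<le> c"
      using that \<open>0 < c\<close> by auto
    then have "w\<^sup>2 \<le> c\<^sup>2" "0 < w\<^sup>2"
      by (simp_all add: power_mono)
    then have "1 / (4 * c\<^sup>2) \<le> 1 / (4 * w\<^sup>2)"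
      using \<open>0 < c\<close> by (intro divide_left_mono) auto
    then have "s0 \<le> 1 / (4 * w\<^sup>2)"
      unfolding c_sq by linarith
    moreover have "exp (- c\<^sup>2) \<le> exp (- w\<^sup>2)"
      using \<open>w\<^sup>2 \<le> c\<^sup>2\<close> by simp
    ultimately show ?thesis
      using s0 by (intro mult_mono) (auto simp: sum_nonneg)
  qed
  with \<open>0 < c\<close> show thesis
    by (rule that)
qed

text \<open>The similarity form is a superposition of Gaussian forms, all nonnegative and bounded
  away from 0 for small widths.\<close>
lemma positive_definite_on_similarity:
  fixes A :: "'a::euclidean_space set"
  assumes "finite A"
  shows "positive_definite_on A similarity"
  unfolding positive_definite_on_def
proof (intro allI impI)
  fix v :: "'a \<Rightarrow> real"
  assume "\<exists>x\<in>A. v x \<noteq> 0"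
  then obtain x0 where "x0 \<in> A" "v x0 \<noteq> 0"
    by blast
  then have norm_pos: "0 < (\<Sum>x\<in>A. (v x)\<^sup>2)"
    using \<open>finite A\<close> by (intro sum_pos2[of A x0]) auto
  obtain c where "0 < c" and lower_bound: "\<And>w. w \<in> {c / 2..c} \<Longrightarrow>
      exp (- c\<^sup>2) * ((\<Sum>x\<in>A. (v x)\<^sup>2) / 2) \<le> exp (- w\<^sup>2) * kernel_form (gaussian_kernel (1 / (4 * w\<^sup>2))) A v v"
    using kernel_form_gaussian_subordination_lower_bound[OF \<open>finite A\<close>] by blast
  have "0 < kernel_form similarity A v v * (sqrt pi / 2)"
  proof (rule has_integral_pos_of_ge_on_interval[OF has_integral_kernel_form_gaussian_subordination[OF \<open>finite A\<close>]])
    show "0 \<le> exp (- w\<^sup>2) * kernel_form (gaussian_kernel (1 / (4 * w\<^sup>2))) A v v" for w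
      by (simp add: kernel_form_gaussian_nonneg)
    show "{c / 2..c} \<subseteq> {0<..}" "c / 2 < c"
      using \<open>0 < c\<close> by auto
    show "0 < exp (- c\<^sup>2) * ((\<Sum>x\<in>A. (v x)\<^sup>2) / 2)"
      using norm_pos by simp
  qed (fact lower_bound)
  then show "0 < kernel_form similarity A v v"
    by (simp add: zero_less_mult_iff)
qed

section \<open>Weighting and magnitude\<close>

lemma similarity_commute: "similarity x y = similarity y x"
  by (simp add: similarity_def norm_minus_commute)

lemma weighting_spec:
  fixes A :: "'a::euclidean_space set"
  assumes "finite A"
  shows "(\<forall>x\<in>A. (\<Sum>y\<in>A. similarity x y * weighting A y) = 1) \<and> (\<forall>x. x \<notin> A \<longrightarrow> weighting A x = 0)"
proof -
  let ?P = "\<lambda>w. (\<forall>x\<in>A. (\<Sum>y\<in>A. similarity x y * w y) = 1) \<and> (\<forall>x. x \<notin> A \<longrightarrow> w x = 0)"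
  note pd = positive_definite_on_similarity[OF assms]
  obtain w where w: "\<forall>x\<in>A. (\<Sum>y\<in>A. similarity x y * w y) = 1"
    using positive_definite_on_solvable[where K = similarity and b = "\<lambda>_. 1", OF assms similarity_commute pd] by blast
  have P0: "?P (\<lambda>x. if x \<in> A then w x else 0)"
    using w by (simp cong: sum.cong)
  have unique: "w' = (\<lambda>x. if x \<in> A then w x else 0)" if "?P w'" for w'
  proof
    fix x
    show "w' x = (if x \<in> A then w x else 0)"
      using that P0 positive_definite_on_solution_unique[OF pd, of w' "\<lambda>_. 1" "\<lambda>x. if x \<in> A then w x else 0" x]
      by (cases "x \<in> A") auto
  qed
  have "?P (THE w. ?P w)"
    using P0 unique by (rule theI[where P = ?P])
  then show ?thesis
    unfolding weighting_def .
qed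

lemma weighting_sum_similarity:
  fixes A :: "'a::euclidean_space set"
  shows "finite A \<Longrightarrow> x \<in> A \<Longrightarrow> (\<Sum>y\<in>A. similarity x y * weighting A y) = 1"
  using weighting_spec by blast

lemma weighting_notin:
  fixes A :: "'a::euclidean_space set"
  shows "finite A \<Longrightarrow> x \<notin> A \<Longrightarrow> weighting A x = 0"
  using weighting_spec by blast

lemma magnitude_mono:
  fixes A B :: "'a::euclidean_space set"
  assumes "finite B" "A \<subseteq> B"
  shows "magnitude A \<le> magnitude B"
  unfolding magnitude_def
proof (rule solution_sum_mono[where K = similarity, OF assms similarity_commute])
  show "0 \<le> kernel_form similarity B v v" for v
    by (rule positive_definite_on_imp_kernel_form_nonneg[OF positive_definite_on_similarity[OF \<open>finite B\<close>]])
  have "finite A"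
    using assms finite_subset by blast
  then show "(\<Sum>y\<in>A. similarity x y * weighting A y) = 1" if "x \<in> A" for x
    using that by (rule weighting_sum_similarity)
  show "weighting A x = 0" if "x \<notin> A" for x
    using \<open>finite A\<close> that by (rule weighting_notin)
  show "(\<Sum>y\<in>B. similarity x y * weighting B y) = 1" if "x \<in> B" for x
    using \<open>finite B\<close> that by (rule weighting_sum_similarity)
qed

lemma magnitude_le_card:
  fixes A :: "'a::euclidean_space set"
  assumes "finite A" and nonneg: "\<forall>x\<in>A. 0 \<le> weighting A x"
  shows "magnitude A \<le> card A"
proof -
  have "weighting A x \<le> 1" if "x \<in> A" for x
  proof -
    have "similarity x x * weighting A x \<le> (\<Sum>y\<in>A. similarity x y * weighting A y)"
      using nonneg \<open>finite A\<close> that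
      by (intro member_le_sum) (auto simp: similarity_def)
    then show ?thesis
      using weighting_sum_similarity[OF \<open>finite A\<close> that] by (simp add: similarity_def)
  qed
  then have "(\<Sum>x\<in>A. weighting A x) \<le> (\<Sum>x\<in>A. 1)"
    by (intro sum_mono)
  then show ?thesis
    by (simp add: magnitude_def)
qed

lemma magnitude_nonneg:
  "\<forall>x\<in>A. 0 \<le> weighting A x \<Longrightarrow> 0 \<le> magnitude A"
  unfolding magnitude_def by (rule sum_nonneg) blast

lemma card_scaled:
  "t \<noteq> 0 \<Longrightarrow> card (scaled t A) = card A"
  unfolding scaled_def by (intro card_image inj_onI) simp

theorem theorem5p5:
  fixes X Y :: "(real ^ 'n) set" and t :: real
  assumes "t > 0" and "finite X" and "finite Y"
    and "\<forall>x\<in>scaled t X. weighting (scaled t X) x \<ge> 0"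
    and "\<forall>x\<in>scaled t Y. weighting (scaled t Y) x \<ge> 0"
    and "\<forall>x\<in>scaled t (X \<union> Y). weighting (scaled t (X \<union> Y)) x \<ge> 0"
  shows "0 \<le> d_Mag t X Y \<and> d_Mag t X Y \<le> 2 * real (card (X \<union> Y))"
proof -
  have "finite (scaled t (X \<union> Y))"
    using assms(2,3) by (simp add: scaled_def)
  moreover have "scaled t X \<subseteq> scaled t (X \<union> Y)" "scaled t Y \<subseteq> scaled t (X \<union> Y)"
    by (auto simp: scaled_def)
  ultimately have "magnitude (scaled t X) \<le> magnitude (scaled t (X \<union> Y))"
    "magnitude (scaled t Y) \<le> magnitude (scaled t (X \<union> Y))"
    by (auto intro: magnitude_mono)
  moreover have "magnitude (scaled t (X \<union> Y)) \<le> card (X \<union> Y)"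
    using magnitude_le_card[OF \<open>finite (scaled t (X \<union> Y))\<close> assms(6)] card_scaled[of t "X \<union> Y"] \<open>t > 0\<close>
    by simp
  moreover have "0 \<le> magnitude (scaled t X)" "0 \<le> magnitude (scaled t Y)"
    using assms(4,5) by (auto intro: magnitude_nonneg)
  ultimately show ?thesis
    unfolding d_Mag_def by linarith
qed

end
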